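(* Let $(M,g,k,t)$ be admissible with $t=\ell\nabla\tau$, let $f$ be smooth on the range of $\tau$, and let $g_K=d(f(\tau)k^\flat)(\cdot,J\cdot)$, $J=J_{g,k,t}$, be the induced Kähler metric on the open region where $f\iota<0$ and $f'G/\ell-f\,dk^\flat(k,t)<0$. Then on that region $$g_K(\mathcal V,\mathcal H)=0,\qquad g_K(k,t)=0,\qquad g_K(k,k)=g_K(t,t),\qquad g_K|_{\mathcal H}=-f(\tau)\,\iota\; g|_{\mathcal H}.$$
   Context: Standing setup: $(M,g)$ is an oriented semi-Riemannian $4$-manifold with Levi-Civita connection $\nabla$, and $k_+,k_-$ are vector fields which are pointwise linearly independent, such that with $\mathcal V:=\mathrm{span}(k_+,k_-)$ the $g$-orthogonal complement $\mathcal H:=\mathcal V^\perp$ is spacelike ($g|_{\mathcal H}$ positive definite). Orient $\mathcal V$ by the ordered pair $(k_+,k_-)$ and give $\mathcal H$ the induced orientation ($(e_1,e_2)$ positive iff $(k_+,k_-,e_1,e_2)$ positive). $J=J_{g,k_+,k_-}$ is defined by $Jk_+=k_-$, $Jk_-=-k_+$, and $Je_1=e_2$, $Je_2=-e_1$ for any positively oriented $g$-orthonormal frame $(e_1,e_2)$ of $\mathcal H$. For $X$ with values in $\mathcal V$, $\nabla^oX$ is the trace-free symmetric part of $\mathcal H\to\mathcal H$, $v\mapsto \pi(\nabla_vX)$ ($\pi$ the orthogonal projection onto $\mathcal H$); the twist function of $X$ is $\iota^X:=g(X,[e_1,e_2])$ for a positively oriented $g$-orthonormal local frame $(e_1,e_2)$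 of $\mathcal H$. Admissible manifold: an oriented semi-Riemannian $4$-manifold $(M,g)$ with vector fields $k,t$ such that, with $k_+=k$, $k_-=t$ in the setup above, (1) $[k,\Gamma(\mathcal H)]\subset\Gamma(\mathcal H)$, $[t,\Gamma(\mathcal H)]\subset\Gamma(\mathcal H)$ and $J\circ\nabla^ok=\nabla^ot$ on $\mathcal H$ (so $J$ is integrable); (2) $t=\ell\nabla\tau$ for smooth functions $\ell,\tau$; (3) the gradients $\nabla(g(k,t))$ and $\nabla(g(k,k))$ take values in $\mathcal V$. Notation: $k^\flat=g(k,\cdot)$, $\iota:=\iota^k$, $G:=g(k,k)g(t,t)-g(k,t)^2$, $f'$ the derivative of $f$. *)

theory Defs
  imports "HOL-Analysis.Analysis"
begin

text \<open>Local (coordinate chart) model: the manifold is an open set U of real^4 carrying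
  the standard orientation; vectors and points are elements of real^4; a metric is a
  matrix field gm.\<close>

type_synonym vec4 = "real^4"

fun Cn_on :: "nat \<Rightarrow> 'a::euclidean_space set \<Rightarrow> ('a \<Rightarrow> 'b::real_normed_vector) \<Rightarrow> bool" where
  "Cn_on 0 S f = continuous_on S f"
| "Cn_on (Suc n) S f = (f differentiable_on S \<and>
      (\<forall>v. Cn_on n S (\<lambda>x. frechet_derivative f (at x) v)))"

definition smooth_on :: "'a::euclidean_space set \<Rightarrow> ('a \<Rightarrow> 'b::real_normed_vector) \<Rightarrow> bool" where
  "smooth_on S f = (\<forall>n. Cn_on n S f)"

definition Dir :: "('a::real_normed_vector \<Rightarrow> 'b::real_normed_vector) \<Rightarrow> 'a \<Rightarrow> 'a \<Rightarrow> 'b" where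
  "Dir F x v = frechet_derivative F (at x) v"

definition gx :: "(vec4 \<Rightarrow> real^4^4) \<Rightarrow> vec4 \<Rightarrow> vec4 \<Rightarrow> vec4 \<Rightarrow> real" where
  "gx gm x u v = u \<bullet> (gm x *v v)"

definition Dg :: "(vec4 \<Rightarrow> real^4^4) \<Rightarrow> vec4 \<Rightarrow> vec4 \<Rightarrow> vec4 \<Rightarrow> vec4 \<Rightarrow> real" where
  "Dg gm x a b c = b \<bullet> (Dir gm x a *v c)"

definition Christoffel :: "(vec4 \<Rightarrow> real^4^4) \<Rightarrow> vec4 \<Rightarrow> vec4 \<Rightarrow> vec4 \<Rightarrow> vec4" where
  "Christoffel gm x v w = matrix_inv (gm x) *v
     (\<chi> l. (Dg gm x v (axis l 1) w + Dg gm x w (axis l 1) v - Dg gm x (axis l 1) v w) / 2)"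

definition LC :: "(vec4 \<Rightarrow> real^4^4) \<Rightarrow> (vec4 \<Rightarrow> vec4) \<Rightarrow> vec4 \<Rightarrow> vec4 \<Rightarrow> vec4" where
  "LC gm X x v = Dir X x v + Christoffel gm x v (X x)"

definition lie :: "(vec4 \<Rightarrow> vec4) \<Rightarrow> (vec4 \<Rightarrow> vec4) \<Rightarrow> vec4 \<Rightarrow> vec4" where
  "lie X Y x = Dir Y x (X x) - Dir X x (Y x)"

definition grad :: "(vec4 \<Rightarrow> real^4^4) \<Rightarrow> (vec4 \<Rightarrow> real) \<Rightarrow> vec4 \<Rightarrow> vec4" where
  "grad gm h x = matrix_inv (gm x) *v (\<chi> i. Dir h x (axis i 1))"

definition Vd :: "(vec4 \<Rightarrow> vec4) \<Rightarrow> (vec4 \<Rightarrow> vec4) \<Rightarrow> vec4 \<Rightarrow> vec4 set" where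
  "Vd kp km x = span {kp x, km x}"

definition Hd :: "(vec4 \<Rightarrow> real^4^4) \<Rightarrow> (vec4 \<Rightarrow> vec4) \<Rightarrow> (vec4 \<Rightarrow> vec4) \<Rightarrow> vec4 \<Rightarrow> vec4 set" where
  "Hd gm kp km x = {v. \<forall>w\<in>Vd kp km x. gx gm x v w = 0}"

definition projH :: "(vec4 \<Rightarrow> real^4^4) \<Rightarrow> (vec4 \<Rightarrow> vec4) \<Rightarrow> (vec4 \<Rightarrow> vec4) \<Rightarrow> vec4 \<Rightarrow> vec4 \<Rightarrow> vec4" where
  "projH gm kp km x w = (THE p. p \<in> Hd gm kp km x \<and> w - p \<in> Vd kp km x)"

definition posframe :: "(vec4 \<Rightarrow> real^4^4) \<Rightarrow> (vec4 \<Rightarrow> vec4) \<Rightarrow> (vec4 \<Rightarrow> vec4) \<Rightarrow> vec4 \<Rightarrow> vec4 \<Rightarrow> vec4 \<Rightarrow> bool" where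
  "posframe gm kp km x e1 e2 =
     (e1 \<in> Hd gm kp km x \<and> e2 \<in> Hd gm kp km x \<and>
      gx gm x e1 e1 = 1 \<and> gx gm x e2 e2 = 1 \<and> gx gm x e1 e2 = 0 \<and>
      det (vector [kp x, km x, e1, e2] :: real^4^4) > 0)"

definition Jop :: "(vec4 \<Rightarrow> real^4^4) \<Rightarrow> (vec4 \<Rightarrow> vec4) \<Rightarrow> (vec4 \<Rightarrow> vec4) \<Rightarrow> vec4 \<Rightarrow> vec4 \<Rightarrow> vec4" where
  "Jop gm kp km x = (THE L. linear L \<and> L (kp x) = km x \<and> L (km x) = - kp x \<and>
      (\<forall>e1 e2. posframe gm kp km x e1 e2 \<longrightarrow> L e1 = e2 \<and> L e2 = - e1))"

definition trH :: "(vec4 \<Rightarrow> real^4^4) \<Rightarrow> (vec4 \<Rightarrow> vec4) \<Rightarrow> (vec4 \<Rightarrow> vec4) \<Rightarrow> vec4 \<Rightarrow> (vec4 \<Rightarrow> vec4) \<Rightarrow> real" where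
  "trH gm kp km x A = (THE c. \<forall>e1 e2. posframe gm kp km x e1 e2 \<longrightarrow>
      c = gx gm x (A e1) e1 + gx gm x (A e2) e2)"

text \<open>nabla^o X at x: trace-free symmetric part of v \<mapsto> pi(nabla_v X) on H_x.\<close>
definition nablao :: "(vec4 \<Rightarrow> real^4^4) \<Rightarrow> (vec4 \<Rightarrow> vec4) \<Rightarrow> (vec4 \<Rightarrow> vec4) \<Rightarrow> (vec4 \<Rightarrow> vec4) \<Rightarrow> vec4 \<Rightarrow> vec4 \<Rightarrow> vec4" where
  "nablao gm kp km X x v =
     (let A = (\<lambda>u. projH gm kp km x (LC gm X x u)) in
      THE w. w \<in> Hd gm kp km x \<and>
        (\<forall>u\<in>Hd gm kp km x. gx gm x w u =
            (gx gm x (A v) u + gx gm x v (A u)) / 2 - trH gm kp km x A / 2 * gx gm x v u))"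

text \<open>Twist function of X: g(X,[e1,e2]) for a positively oriented orthonormal local
  frame (e1,e2) of H (independent of the frame).\<close>
definition twist :: "vec4 set \<Rightarrow> (vec4 \<Rightarrow> real^4^4) \<Rightarrow> (vec4 \<Rightarrow> vec4) \<Rightarrow> (vec4 \<Rightarrow> vec4) \<Rightarrow> (vec4 \<Rightarrow> vec4) \<Rightarrow> vec4 \<Rightarrow> real" where
  "twist U gm kp km X x = (THE c. \<forall>W e1 e2. open W \<and> x \<in> W \<and> W \<subseteq> U \<and>
      smooth_on W e1 \<and> smooth_on W e2 \<and> (\<forall>y\<in>W. posframe gm kp km y (e1 y) (e2 y)) \<longrightarrow>
      gx gm x (X x) (lie e1 e2 x) = c)"

text \<open>Musical flat (components of the 1-form g(X,.)) and exterior derivative of a 1-form.\<close>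
definition flat :: "(vec4 \<Rightarrow> real^4^4) \<Rightarrow> (vec4 \<Rightarrow> vec4) \<Rightarrow> vec4 \<Rightarrow> vec4" where
  "flat gm X x = transpose (gm x) *v X x"

definition dform :: "(vec4 \<Rightarrow> vec4) \<Rightarrow> vec4 \<Rightarrow> vec4 \<Rightarrow> vec4 \<Rightarrow> real" where
  "dform \<alpha> x u v = Dir \<alpha> x u \<bullet> v - Dir \<alpha> x v \<bullet> u"

definition admissible :: "vec4 set \<Rightarrow> (vec4 \<Rightarrow> real^4^4) \<Rightarrow> (vec4 \<Rightarrow> vec4) \<Rightarrow> (vec4 \<Rightarrow> vec4)
    \<Rightarrow> (vec4 \<Rightarrow> real) \<Rightarrow> (vec4 \<Rightarrow> real) \<Rightarrow> bool" where
  "admissible U gm k t l \<tau> =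
    (open U \<and> smooth_on U gm \<and>
     (\<forall>x\<in>U. transpose (gm x) = gm x \<and> invertible (gm x)) \<and>
     smooth_on U k \<and> smooth_on U t \<and>
     (\<forall>x\<in>U. \<forall>a b. a *\<^sub>R k x + b *\<^sub>R t x = 0 \<longrightarrow> a = 0 \<and> b = 0) \<and>
     (\<forall>x\<in>U. \<forall>v\<in>Hd gm k t x. v \<noteq> 0 \<longrightarrow> gx gm x v v > 0) \<and>

     (\<forall>X. smooth_on U X \<and> (\<forall>y\<in>U. X y \<in> Hd gm k t y) \<longrightarrow>
          (\<forall>y\<in>U. lie k X y \<in> Hd gm k t y \<and> lie t X y \<in> Hd gm k t y)) \<and>
     (\<forall>x\<in>U. \<forall>v\<in>Hd gm k t x. Jop gm k t x (nablao gm k t k x v) = nablao gm k t t x v) \<and>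

     smooth_on U l \<and> smooth_on U \<tau> \<and> (\<forall>x\<in>U. t x = l x *\<^sub>R grad gm \<tau> x) \<and>

     (\<forall>x\<in>U. grad gm (\<lambda>y. gx gm y (k y) (t y)) x \<in> Vd k t x \<and>
             grad gm (\<lambda>y. gx gm y (k y) (k y)) x \<in> Vd k t x))"

definition Gfun :: "(vec4 \<Rightarrow> real^4^4) \<Rightarrow> (vec4 \<Rightarrow> vec4) \<Rightarrow> (vec4 \<Rightarrow> vec4) \<Rightarrow> vec4 \<Rightarrow> real" where
  "Gfun gm k t x = gx gm x (k x) (k x) * gx gm x (t x) (t x) - (gx gm x (k x) (t x))^2"

definition gKahler :: "(vec4 \<Rightarrow> real^4^4) \<Rightarrow> (vec4 \<Rightarrow> vec4) \<Rightarrow> (vec4 \<Rightarrow> vec4) \<Rightarrow> (real \<Rightarrow> real)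
    \<Rightarrow> (vec4 \<Rightarrow> real) \<Rightarrow> vec4 \<Rightarrow> vec4 \<Rightarrow> vec4 \<Rightarrow> real" where
  "gKahler gm k t f \<tau> x u v = dform (\<lambda>y. f (\<tau> y) *\<^sub>R flat gm k y) x u (Jop gm k t x v)"

definition Kregion :: "vec4 set \<Rightarrow> (vec4 \<Rightarrow> real^4^4) \<Rightarrow> (vec4 \<Rightarrow> vec4) \<Rightarrow> (vec4 \<Rightarrow> vec4) \<Rightarrow> (vec4 \<Rightarrow> real)
    \<Rightarrow> (vec4 \<Rightarrow> real) \<Rightarrow> (real \<Rightarrow> real) \<Rightarrow> vec4 set" where
  "Kregion U gm k t l \<tau> f = {x\<in>U. f (\<tau> x) * twist U gm k t k x < 0 \<and>
     deriv f (\<tau> x) * Gfun gm k t x / l x - f (\<tau> x) * dform (flat gm k) x (k x) (t x) < 0}"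

end

theory Submission
  imports Defs
begin

text \<open>Let \<omega> = d(f(\<tau>) k\<flat>) = f'(\<tau>) d\<tau> \<and> k\<flat> + f(\<tau>) dk\<flat>, so that g_K(u, w) = \<omega>(u, J w).
  Since t = l \<nabla>\<tau>, both d\<tau> and k\<flat> vanish on H, hence \<omega>(u, w) = f(\<tau>) dk\<flat>(u, w) for w in H.
  By Cartan's formula dk\<flat>(V, H) = 0: the brackets of k and t with horizontal fields are
  horizontal and g(k,k), g(k,t) are constant along H. On H, dk\<flat>(e1, e2) = - g(k, [e1, e2]) = - \<iota>
  because k\<flat> vanishes on every horizontal field. Finally J preserves V and H and is a rotation by a
  right angle on each, which gives g_K(V, H) = 0, g_K = - f(\<tau>) \<iota> g on H, g_K(k, t) = \<omega>(k, - k) = 0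
  and g_K(t, t) = \<omega>(t, - k) = \<omega>(k, t) = g_K(k, k).\<close>

lemma Cn_on_Suc_imp: "Cn_on (Suc n) S f \<Longrightarrow> Cn_on n S f"
proof (induction n arbitrary: f)
  case 0
  then show ?case by (simp add: differentiable_imp_continuous_on)
next
  case (Suc n)
  then show ?case by auto
qed

lemma Cn_on_subset: "Cn_on n S f \<Longrightarrow> T \<subseteq> S \<Longrightarrow> Cn_on n T f"
proof (induction n arbitrary: f)
  case 0
  then show ?case by (auto intro: continuous_on_subset)
next
  case (Suc n)
  then show ?case by (auto intro: differentiable_on_subset)
qed

lemma Cn_on_has_derivative:
  "Cn_on (Suc n) S f \<Longrightarrow> open S \<Longrightarrow> x \<in> S \<Longrightarrow> (f has_derivative frechet_derivative f (at x)) (at x)"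
  by (metis Cn_on.simps(2) differentiable_on_eq_differentiable_at frechet_derivative_works)

lemma Cn_on_cong: "open S \<Longrightarrow> (\<And>x. x \<in> S \<Longrightarrow> f x = g x) \<Longrightarrow> Cn_on n S f \<Longrightarrow> Cn_on n S g"
proof (induction n arbitrary: f g)
  case 0
  then show ?case using continuous_on_cong by force
next
  case (Suc n)
  have g': "(g has_derivative frechet_derivative f (at x)) (at x)" if "x \<in> S" for x
    by (rule has_derivative_transform_within_open[OF Cn_on_has_derivative[OF Suc.prems(3,1) that]])
       (use Suc.prems that in auto)
  then have "frechet_derivative g (at x) = frechet_derivative f (at x)" if "x \<in> S" for x
    using that by (metis frechet_derivative_at)
  moreover have "g differentiable_on S"
    using g' Suc.prems(1) differentiable_on_eq_differentiable_at differentiableI by blast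
  ultimately show ?case
    using Suc.prems(1,3) Suc.IH[of "\<lambda>x. frechet_derivative f (at x) _" "\<lambda>x. frechet_derivative g (at x) _"]
    by auto
qed

lemma Cn_on_SucI:
  assumes "open S" "\<And>x. x \<in> S \<Longrightarrow> (f has_derivative D x) (at x)" "\<And>v. Cn_on n S (\<lambda>x. D x v)"
  shows "Cn_on (Suc n) S f"
proof -
  have "f differentiable_on S"
    using assms(1,2) by (meson differentiableI differentiable_on_eq_differentiable_at)
  moreover have "frechet_derivative f (at x) = D x" if "x \<in> S" for x
    using assms(2)[OF that] by (rule frechet_derivative_at[symmetric])
  then have "Cn_on n S (\<lambda>x. frechet_derivative f (at x) v)" for v
    by (intro Cn_on_cong[OF assms(1) _ assms(3)]) simp
  ultimately show ?thesis by simp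
qed

lemma Cn_on_const: "open S \<Longrightarrow> Cn_on n S (\<lambda>x. c)"
proof (induction n arbitrary: c)
  case 0
  then show ?case by simp
next
  case (Suc n)
  show ?case by (rule Cn_on_SucI[OF Suc.prems, where D="\<lambda>x v. 0"]) (auto intro: Suc.IH[OF Suc.prems])
qed

lemma Cn_on_bounded_linear:
  "open S \<Longrightarrow> bounded_linear L \<Longrightarrow> Cn_on n S f \<Longrightarrow> Cn_on n S (\<lambda>x. L (f x))"
proof (induction n arbitrary: f)
  case 0
  then show ?case using bounded_linear.continuous_on by (metis Cn_on.simps(1))
next
  case (Suc n)
  show ?case
  proof (rule Cn_on_SucI[OF Suc.prems(1), where D="\<lambda>x v. L (frechet_derivative f (at x) v)"])
    show "((\<lambda>x. L (f x)) has_derivative (\<lambda>v. L (frechet_derivative f (at x) v))) (at x)" if "x \<in> S" for x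
      using bounded_linear.has_derivative[OF Suc.prems(2) Cn_on_has_derivative[OF Suc.prems(3,1) that]] .
    show "Cn_on n S (\<lambda>x. L (frechet_derivative f (at x) v))" for v
      using Suc.IH[OF Suc.prems(1,2)] Suc.prems(3) by simp
  qed
qed

lemma Cn_on_add: "open S \<Longrightarrow> Cn_on n S f \<Longrightarrow> Cn_on n S g \<Longrightarrow> Cn_on n S (\<lambda>x. f x + g x)"
proof (induction n arbitrary: f g)
  case 0
  then show ?case by (simp add: continuous_on_add)
next
  case (Suc n)
  let ?D = "\<lambda>x v. frechet_derivative f (at x) v + frechet_derivative g (at x) v"
  show ?case
  proof (rule Cn_on_SucI[OF Suc.prems(1), where D="?D"])
    show "((\<lambda>x. f x + g x) has_derivative ?D x) (at x)" if "x \<in> S" for x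
      using has_derivative_add[OF Cn_on_has_derivative[OF Suc.prems(2,1) that]
          Cn_on_has_derivative[OF Suc.prems(3,1) that]] .
    show "Cn_on n S (\<lambda>x. ?D x v)" for v
      using Suc.IH[OF Suc.prems(1)] Suc.prems(2,3) by simp
  qed
qed

lemma Cn_on_bounded_bilinear:
  "open S \<Longrightarrow> bounded_bilinear P \<Longrightarrow> Cn_on n S f \<Longrightarrow> Cn_on n S g \<Longrightarrow> Cn_on n S (\<lambda>x. P (f x) (g x))"
proof (induction n arbitrary: f g)
  case 0
  then show ?case by (simp add: bounded_bilinear.continuous_on)
next
  case (Suc n)
  let ?D = "\<lambda>x v. P (f x) (frechet_derivative g (at x) v) + P (frechet_derivative f (at x) v) (g x)"
  show ?case
  proof (rule Cn_on_SucI[OF Suc.prems(1), where D="?D"])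
    show "((\<lambda>x. P (f x) (g x)) has_derivative ?D x) (at x)" if "x \<in> S" for x
      using bounded_bilinear.FDERIV[OF Suc.prems(2) Cn_on_has_derivative[OF Suc.prems(3,1) that]
          Cn_on_has_derivative[OF Suc.prems(4,1) that]] .
    show "Cn_on n S (\<lambda>x. ?D x v)" for v
      using Suc.prems Cn_on_Suc_imp[OF Suc.prems(3)] Cn_on_Suc_imp[OF Suc.prems(4)]
      by (intro Cn_on_add Suc.IH) auto
  qed
qed

lemma Cn_on_compose_real:
  fixes h :: "'a::euclidean_space \<Rightarrow> real" and \<phi> :: "real \<Rightarrow> real"
  shows "open S \<Longrightarrow> open T \<Longrightarrow> smooth_on T \<phi> \<Longrightarrow> Cn_on n S h \<Longrightarrow> h ` S \<subseteq> T \<Longrightarrow>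
    Cn_on n S (\<lambda>x. \<phi> (h x))"
proof (induction n arbitrary: \<phi>)
  case 0
  then show ?case by (simp add: smooth_on_def) (metis Cn_on.simps(1) continuous_on_compose2)
next
  case (Suc n)
  define \<phi>' where "\<phi>' = (\<lambda>y. frechet_derivative \<phi> (at y) 1)"
  have "smooth_on T \<phi>'"
    using Suc.prems(3) unfolding smooth_on_def \<phi>'_def by (metis Cn_on.simps(2))
  show ?case
  proof (rule Cn_on_SucI[OF Suc.prems(1), where D="\<lambda>x v. frechet_derivative h (at x) v * \<phi>' (h x)"])
    fix x assume x: "x \<in> S"
    have d\<phi>: "(\<phi> has_derivative frechet_derivative \<phi> (at (h x))) (at (h x))"
      using Cn_on_has_derivative[OF _ Suc.prems(2)] Suc.prems(3,5) x unfolding smooth_on_def by blast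
    have "frechet_derivative \<phi> (at (h x)) w = w * \<phi>' (h x)" for w
      unfolding \<phi>'_def using linear_scale_real[OF has_derivative_linear[OF d\<phi>], of w 1] by simp
    then show "((\<lambda>x. \<phi> (h x)) has_derivative (\<lambda>v. frechet_derivative h (at x) v * \<phi>' (h x))) (at x)"
      using diff_chain_at[OF Cn_on_has_derivative[OF Suc.prems(4,1) x] d\<phi>] by (simp add: o_def)
  next
    show "Cn_on n S (\<lambda>x. frechet_derivative h (at x) v * \<phi>' (h x))" for v
      using Suc.prems(4) Suc.IH[OF Suc.prems(1,2) \<open>smooth_on T \<phi>'\<close> Cn_on_Suc_imp[OF Suc.prems(4)] Suc.prems(5)]
      by (intro Cn_on_bounded_bilinear[OF Suc.prems(1) bounded_bilinear_mult]) simp_all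
  qed
qed

lemma Cn_on_inverse: "Cn_on n (- {0::real}) inverse"
proof (induction n)
  case 0
  then show ?case by (simp add: continuous_on_inverse continuous_on_id)
next
  case (Suc n)
  have "open (- {0::real})" by auto
  then show ?case
  proof (rule Cn_on_SucI[where D="\<lambda>x. (*) (- (inverse x * inverse x))"])
    fix x :: real assume "x \<in> - {0}"
    then have "(inverse has_field_derivative - (inverse x * inverse x)) (at x)"
      using DERIV_inverse[of x UNIV] by (simp add: power2_eq_square)
    then show "(inverse has_derivative (*) (- (inverse x * inverse x))) (at x)"
      unfolding has_field_derivative_def .
  next
    have "Cn_on n (- {0::real}) (\<lambda>x. - (inverse x * inverse x))"
      by (rule Cn_on_bounded_linear[OF \<open>open (- {0})\<close> bounded_linear_minus[OF bounded_linear_ident]])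
        (rule Cn_on_bounded_bilinear[OF \<open>open (- {0})\<close> bounded_bilinear_mult Suc.IH Suc.IH])
    then show "Cn_on n (- {0::real}) (\<lambda>x. - (inverse x * inverse x) * v)" for v
      by (rule Cn_on_bounded_bilinear[OF \<open>open (- {0})\<close> bounded_bilinear_mult _ Cn_on_const[OF \<open>open (- {0})\<close>]])
  qed
qed

lemma smooth_on_inverse: "smooth_on (- {0::real}) inverse"
  using Cn_on_inverse smooth_on_def by blast

lemma Cn_on_sqrt: "Cn_on n {0::real<..} sqrt"
proof (induction n)
  case 0
  then show ?case by (simp add: continuous_on_real_sqrt continuous_on_id)
next
  case (Suc n)
  show ?case
  proof (rule Cn_on_SucI[OF open_greaterThan, where D="\<lambda>x. (*) (inverse (sqrt x) * (1 / 2))"])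
    fix x :: real assume "x \<in> {0<..}"
    then have "(sqrt has_field_derivative inverse (sqrt x) * (1 / 2)) (at x)"
      using DERIV_real_sqrt[of x] by simp
    then show "(sqrt has_derivative (*) (inverse (sqrt x) * (1 / 2))) (at x)"
      unfolding has_field_derivative_def .
  next
    have "Cn_on n {0<..} (\<lambda>x. inverse (sqrt x))"
      by (rule Cn_on_compose_real[OF _ _ smooth_on_inverse Suc.IH]) auto
    then show "Cn_on n {0<..} (\<lambda>x. inverse (sqrt x) * (1 / 2) * v)" for v
      by (intro Cn_on_bounded_bilinear[OF _ bounded_bilinear_mult] Cn_on_const) auto
  qed
qed

lemma bounded_bilinear_matrix_vector_mult: "bounded_bilinear (\<lambda>(A::real^'n^'m) x. A *v x)"
proof
  fix A B :: "real^'n^'m" and x y :: "real^'n" and r :: real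
  show "(A + B) *v x = A *v x + B *v x" by (simp add: matrix_vector_mult_add_rdistrib)
  show "A *v (x + y) = A *v x + A *v y" by (simp add: matrix_vector_right_distrib)
  show "(r *\<^sub>R A) *v x = r *\<^sub>R (A *v x)" by (simp add: scaleR_matrix_vector_assoc)
  show "A *v (r *\<^sub>R x) = r *\<^sub>R (A *v x)" by (simp add: matrix_vector_mult_scaleR)
next
  have "norm (A *v x) \<le> norm A * norm x * (real CARD('m) * real CARD('n))" for A :: "real^'n^'m" and x
  proof -
    have "norm (A *v x) \<le> onorm ((*v) A) * norm x"
      by (simp add: onorm)
    also have "onorm ((*v) A) \<le> real CARD('m) * real CARD('n) * norm A"
    proof (rule onorm_le_matrix_component)
      fix i j
      have "\<bar>A $ i $ j\<bar> \<le> norm (A $ i)" by (metis real_norm_def Finite_Cartesian_Product.norm_nth_le)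
      also have "\<dots> \<le> norm A" by (rule Finite_Cartesian_Product.norm_nth_le)
      finally show "\<bar>A $ i $ j\<bar> \<le> norm A" .
    qed
    finally show ?thesis
      by (simp add: mult_right_mono mult.commute mult.left_commute)
  qed
  then show "\<exists>K. \<forall>(A::real^'n^'m) x. norm (A *v x) \<le> norm A * norm x * K" by blast
qed

lemma smooth_on_const: "open S \<Longrightarrow> smooth_on S (\<lambda>x. c)"
  by (simp add: smooth_on_def Cn_on_const)

lemma smooth_on_diff:
  assumes "open S" "smooth_on S f" "smooth_on S g"
  shows "smooth_on S (\<lambda>x. f x - g x)"
proof -
  have "Cn_on n S (\<lambda>x. f x + - g x)" for n
    using assms by (intro Cn_on_add Cn_on_bounded_linear[OF _ bounded_linear_minus[OF bounded_linear_ident]])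
      (auto simp: smooth_on_def)
  then show ?thesis by (simp add: smooth_on_def)
qed

lemma smooth_on_bounded_bilinear:
  "open S \<Longrightarrow> bounded_bilinear P \<Longrightarrow> smooth_on S f \<Longrightarrow> smooth_on S g \<Longrightarrow> smooth_on S (\<lambda>x. P (f x) (g x))"
  by (simp add: smooth_on_def Cn_on_bounded_bilinear)

lemma smooth_on_mult: "open S \<Longrightarrow> smooth_on S f \<Longrightarrow> smooth_on S g \<Longrightarrow> smooth_on S (\<lambda>x. f x * g x :: real)"
  by (rule smooth_on_bounded_bilinear[OF _ bounded_bilinear_mult])

lemma smooth_on_scaleR: "open S \<Longrightarrow> smooth_on S f \<Longrightarrow> smooth_on S g \<Longrightarrow> smooth_on S (\<lambda>x. f x *\<^sub>R g x)"
  by (rule smooth_on_bounded_bilinear[OF _ bounded_bilinear_scaleR])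

lemma smooth_on_inner: "open S \<Longrightarrow> smooth_on S f \<Longrightarrow> smooth_on S g \<Longrightarrow> smooth_on S (\<lambda>x. f x \<bullet> g x)"
  by (rule smooth_on_bounded_bilinear[OF _ bounded_bilinear_inner])

lemma smooth_on_matrix_vector_mult:
  "open S \<Longrightarrow> smooth_on S f \<Longrightarrow> smooth_on S g \<Longrightarrow> smooth_on S (\<lambda>x. (f x :: real^'n^'m) *v g x)"
  using smooth_on_bounded_bilinear[OF _ bounded_bilinear_matrix_vector_mult, of S f g] by simp

lemma smooth_on_gx:
  "open S \<Longrightarrow> smooth_on S gm \<Longrightarrow> smooth_on S u \<Longrightarrow> smooth_on S v \<Longrightarrow> smooth_on S (\<lambda>y. gx gm y (u y) (v y))"
  unfolding gx_def by (intro smooth_on_inner smooth_on_matrix_vector_mult)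

lemma smooth_on_subset: "smooth_on S f \<Longrightarrow> T \<subseteq> S \<Longrightarrow> smooth_on T f"
  unfolding smooth_on_def by (blast intro: Cn_on_subset)

lemma smooth_on_cong: "open S \<Longrightarrow> (\<And>x. x \<in> S \<Longrightarrow> f x = g x) \<Longrightarrow> smooth_on S f \<Longrightarrow> smooth_on S g"
  using Cn_on_cong[of S f g] by (simp add: smooth_on_def)

lemma smooth_on_compose_real:
  fixes h :: "'a::euclidean_space \<Rightarrow> real" and \<phi> :: "real \<Rightarrow> real"
  assumes "open S" "open T" "smooth_on T \<phi>" "smooth_on S h" "h ` S \<subseteq> T"
  shows "smooth_on S (\<lambda>x. \<phi> (h x))"
  using Cn_on_compose_real[OF assms(1-3) _ assms(5)] assms(4) by (simp add: smooth_on_def)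

lemma smooth_on_imp_continuous_on: "smooth_on S f \<Longrightarrow> continuous_on S f"
  by (metis Cn_on.simps(1) smooth_on_def)

lemma smooth_on_has_derivative:
  "smooth_on S f \<Longrightarrow> open S \<Longrightarrow> x \<in> S \<Longrightarrow> (f has_derivative frechet_derivative f (at x)) (at x)"
  by (meson Cn_on_has_derivative smooth_on_def)

lemma smooth_on_differentiable: "smooth_on S f \<Longrightarrow> open S \<Longrightarrow> x \<in> S \<Longrightarrow> f differentiable (at x)"
  using smooth_on_has_derivative differentiableI by blast

lemma smooth_on_inverse_sqrt:
  assumes "open S" "smooth_on S h" "\<And>x. x \<in> S \<Longrightarrow> h x > 0"
  shows "smooth_on S (\<lambda>x. inverse (sqrt (h x)))"
proof -
  have sqrt: "smooth_on S (\<lambda>x. sqrt (h x))"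
    by (rule smooth_on_compose_real[OF assms(1) open_greaterThan _ assms(2)])
      (use Cn_on_sqrt smooth_on_def assms(3) in auto)
  show ?thesis
    by (rule smooth_on_compose_real[OF assms(1) _ smooth_on_inverse sqrt]) (use assms(3) in force)+
qed

lemma smooth_on_divide:
  assumes "open S" "smooth_on S f" "smooth_on S h" "\<And>x. x \<in> S \<Longrightarrow> h x \<noteq> 0"
  shows "smooth_on S (\<lambda>x. f x / h x :: real)"
proof -
  have "smooth_on S (\<lambda>x. inverse (h x))"
    by (rule smooth_on_compose_real[OF assms(1) _ smooth_on_inverse assms(3)]) (use assms(4) in auto)
  then show ?thesis
    using smooth_on_mult[OF assms(1,2)] by (simp add: divide_inverse)
qed

lemma open_Collect_positive_on:
  fixes h :: "'a::topological_space \<Rightarrow> real"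
  assumes "open S" "continuous_on S h"
  shows "open {y \<in> S. h y > 0}"
proof -
  obtain A where "open A" "A \<inter> S = {y \<in> S. h y > 0}"
    using open_Collect_positive[OF assms(2)] by blast
  then show ?thesis using assms(1) open_Int by fastforce
qed

section \<open>Determinants of 4x4 matrices given by rows\<close>

lemma vector4_nth:
  "(vector [a, b, c, d] :: ('a::zero)^4) $ 1 = a" "(vector [a, b, c, d] :: ('a::zero)^4) $ 2 = b"
  "(vector [a, b, c, d] :: ('a::zero)^4) $ 3 = c" "(vector [a, b, c, d] :: ('a::zero)^4) $ 4 = d"
  unfolding vector_def by simp_all

text \<open>Normal forms singling out row 3 resp. row 4 in the shape expected by
  det_row_add and det_row_mul.\<close>

lemma vector4_as_row3:
  "(vector [a, b, c, d] :: real^4^4) = (\<chi> i. if i = 3 then c else if i = 4 then d else if i = 1 then a else b)"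
  by (simp add: vec_eq_iff forall_4 vector4_nth)

lemma vector4_as_row4:
  "(vector [a, b, c, d] :: real^4^4) = (\<chi> i. if i = 4 then d else if i = 3 then c else if i = 1 then a else b)"
  by (simp add: vec_eq_iff forall_4 vector4_nth)

lemma det_vector4_add3:
  "det (vector [a, b, c + c', d] :: real^4^4) = det (vector [a, b, c, d]) + det (vector [a, b, c', d])"
  unfolding vector4_as_row3 by (rule det_row_add)

lemma det_vector4_add4:
  "det (vector [a, b, c, d + d'] :: real^4^4) = det (vector [a, b, c, d]) + det (vector [a, b, c, d'])"
  unfolding vector4_as_row4 by (rule det_row_add)

lemma det_vector4_scale3: "det (vector [a, b, r *\<^sub>R c, d] :: real^4^4) = r * det (vector [a, b, c, d])"
  unfolding vector4_as_row3 scalar_mult_eq_scaleR[symmetric]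
  by (rule det_row_mul[where a="\<lambda>i. c"])

lemma det_vector4_scale4: "det (vector [a, b, c, r *\<^sub>R d] :: real^4^4) = r * det (vector [a, b, c, d])"
  unfolding vector4_as_row4 scalar_mult_eq_scaleR[symmetric]
  by (rule det_row_mul[where a="\<lambda>i. d"])

lemma det_vector4_same: "det (vector [a, b, c, c] :: real^4^4) = 0"
  unfolding vector4_as_row3 by (rule det_identical_rows[of 3 4]) (auto simp: row_def vec_eq_iff)

lemma det_vector4_rotate:
  "det (vector [a, b, p *\<^sub>R c + q *\<^sub>R d, r *\<^sub>R c + s *\<^sub>R d] :: real^4^4)
     = (p * s - q * r) * det (vector [a, b, c, d])"
proof -
  have "0 = det (vector [a, b, c + d, c + d] :: real^4^4)"
    by (simp add: det_vector4_same)
  also have "\<dots> = det (vector [a, b, c, d]) + det (vector [a, b, d, c])"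
    by (simp only: det_vector4_add3 det_vector4_add4) (simp add: det_vector4_same)
  finally have "det (vector [a, b, d, c] :: real^4^4) = - det (vector [a, b, c, d])"
    by linarith
  then show ?thesis
    by (simp add: det_vector4_add3 det_vector4_add4 det_vector4_scale3 det_vector4_scale4
        det_vector4_same algebra_simps)
qed

lemma det_vector4_nonzero:
  assumes "\<And>\<alpha> \<beta> \<gamma> \<delta>. \<alpha> *\<^sub>R a + \<beta> *\<^sub>R b + \<gamma> *\<^sub>R c + \<delta> *\<^sub>R d = 0 \<Longrightarrow> \<alpha> = 0 \<and> \<beta> = 0 \<and> \<gamma> = 0 \<and> \<delta> = 0"
  shows "det (vector [a, b, c, d] :: real^4^4) \<noteq> 0"
proof
  let ?M = "vector [a, b, c, d] :: real^4^4"
  assume "det ?M = 0"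
  then have "det (transpose ?M) = 0" by simp
  then have "\<not> inj ((*v) (transpose ?M))"
    using invertible_det_nz invertible_left_inverse matrix_left_invertible_injective by blast
  then obtain u v where uv: "u \<noteq> v" "transpose ?M *v u = transpose ?M *v v"
    unfolding inj_def by blast
  let ?w = "u - v"
  have "transpose ?M *v ?w = 0"
    using uv by (simp add: matrix_vector_mult_diff_distrib)
  moreover have "transpose ?M *v ?w = (?w $ 1) *\<^sub>R a + (?w $ 2) *\<^sub>R b + (?w $ 3) *\<^sub>R c + (?w $ 4) *\<^sub>R d"
    unfolding vec_eq_iff transpose_matrix_vector vector_matrix_mult_def
    by (simp add: sum_4 vector4_nth mult.commute)
  ultimately have "?w $ 1 = 0 \<and> ?w $ 2 = 0 \<and> ?w $ 3 = 0 \<and> ?w $ 4 = 0"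
    using assms by metis
  then have "?w = 0"
    by (simp add: vec_eq_iff forall_4)
  with uv(1) show False by simp
qed

lemma continuous_on_det:
  assumes "\<And>i j. continuous_on S (\<lambda>y. M y $ i $ j :: real)"
  shows "continuous_on S (\<lambda>y. det (M y))"
  unfolding det_def using assms
  by (intro continuous_on_sum continuous_on_mult continuous_on_const continuous_on_prod)

lemma continuous_on_det_vector4:
  assumes "continuous_on S a" "continuous_on S b" "continuous_on S c" "continuous_on S d"
  shows "continuous_on S (\<lambda>y. det (vector [a y, b y, c y, d y] :: real^4^4))"
proof (rule continuous_on_det)
  fix i j :: 4
  have nth: "continuous_on S (\<lambda>y. e y $ j)" if "continuous_on S e" for e :: "_ \<Rightarrow> real^4"
    using bounded_linear.continuous_on[OF bounded_linear_vec_nth that] .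
  show "continuous_on S (\<lambda>y. (vector [a y, b y, c y, d y] :: real^4^4) $ i $ j)"
    using exhaust_4[of i] nth[OF assms(1)] nth[OF assms(2)] nth[OF assms(3)] nth[OF assms(4)]
    by (auto simp: vector4_nth)
qed

lemma orthonormal_positive_pair_rotation:
  fixes a b c d :: real
  assumes "a\<^sup>2 + b\<^sup>2 = 1" "c\<^sup>2 + d\<^sup>2 = 1" "a * c + b * d = 0" "a * d - b * c > 0"
  shows "c = - b \<and> d = a"
proof -
  have "(a * d - b * c)\<^sup>2 = (a\<^sup>2 + b\<^sup>2) * (c\<^sup>2 + d\<^sup>2) - (a * c + b * d)\<^sup>2"
    by (simp add: algebra_simps power2_eq_square)
  then have "a * d - b * c = 1"
    using assms by (simp add: power2_eq_1_iff)
  then have "(c + b)\<^sup>2 + (d - a)\<^sup>2 = 0"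
    using assms(1,2) by (simp add: algebra_simps power2_eq_square)
  then show ?thesis by (simp add: sum_power2_eq_zero_iff)
qed

lemma span_pair_iff: "v \<in> span {a, b} \<longleftrightarrow> (\<exists>\<alpha> \<beta>. v = \<alpha> *\<^sub>R a + \<beta> *\<^sub>R b)"
  by (auto simp: span_insert span_singleton algebra_simps)

lemma gx_add_left: "gx gm x (u + u') v = gx gm x u v + gx gm x u' v"
  by (simp add: gx_def inner_add_left)

lemma gx_add_right: "gx gm x u (v + v') = gx gm x u v + gx gm x u v'"
  by (simp add: gx_def matrix_vector_right_distrib inner_add_right)

lemma gx_scaleR_left: "gx gm x (r *\<^sub>R u) v = r * gx gm x u v"
  by (simp add: gx_def)

lemma gx_scaleR_right: "gx gm x u (r *\<^sub>R v) = r * gx gm x u v"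
  by (simp add: gx_def matrix_vector_mult_scaleR)

lemma gx_minus_left: "gx gm x (- u) v = - gx gm x u v"
  by (simp add: gx_def)

lemma gx_minus_right: "gx gm x u (- v) = - gx gm x u v"
  using gx_scaleR_right[of gm x u "-1" v] by simp

lemma gx_diff_left: "gx gm x (u - u') v = gx gm x u v - gx gm x u' v"
  by (simp add: gx_def inner_diff_left)

lemma gx_diff_right: "gx gm x u (v - v') = gx gm x u v - gx gm x u v'"
  by (simp add: gx_def matrix_vector_mult_diff_distrib inner_diff_right)

lemma gx_zero_left: "gx gm x 0 v = 0"
  by (simp add: gx_def)

lemma gx_zero_right: "gx gm x u 0 = 0"
  by (simp add: gx_def)

lemmas gx_simps = gx_add_left gx_add_right gx_scaleR_left gx_scaleR_right gx_minus_left gx_minus_right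
  gx_diff_left gx_diff_right gx_zero_left gx_zero_right

lemma gx_commute: "transpose (gm x) = gm x \<Longrightarrow> gx gm x u v = gx gm x v u"
  unfolding gx_def by (metis dot_lmul_matrix inner_commute vector_transpose_matrix)

lemma flat_inner: "flat gm X x \<bullet> v = gx gm x (X x) v"
  by (simp add: flat_def gx_def dot_lmul_matrix)

lemma matrix_inv_right: "invertible A \<Longrightarrow> A ** matrix_inv A = mat 1"
  unfolding invertible_def matrix_inv_def by (rule someI2_ex) auto

definition gnormalize :: "(vec4 \<Rightarrow> real^4^4) \<Rightarrow> vec4 \<Rightarrow> vec4 \<Rightarrow> vec4" where
  "gnormalize gm x v = inverse (sqrt (gx gm x v v)) *\<^sub>R v"

lemma gx_gnormalize:
  assumes "gx gm x v v > 0"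
  shows "gx gm x (gnormalize gm x v) (gnormalize gm x v) = 1"
proof -
  have "inverse (sqrt (gx gm x v v)) * (inverse (sqrt (gx gm x v v)) * gx gm x v v) = 1"
    using assms by (simp add: field_simps)
  then show ?thesis by (simp add: gnormalize_def gx_simps)
qed

lemma gnormalize_unit: "gx gm x v v = 1 \<Longrightarrow> gnormalize gm x v = v"
  by (simp add: gnormalize_def)

lemma smooth_on_gnormalize:
  assumes "open W" "smooth_on W gm" "smooth_on W X" "\<And>y. y \<in> W \<Longrightarrow> gx gm y (X y) (X y) > 0"
  shows "smooth_on W (\<lambda>y. gnormalize gm y (X y))"
  unfolding gnormalize_def using assms
  by (intro smooth_on_scaleR smooth_on_inverse_sqrt smooth_on_gx) auto

lemma notin_span_gx_orthogonal:
  assumes "\<forall>s\<in>S. gx gm x v s = 0" "gx gm x v v \<noteq> 0"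
  shows "v \<notin> span S"
proof
  have "subspace {a. gx gm x v a = 0}" by (auto simp: subspace_def gx_simps)
  then have "span S \<subseteq> {a. gx gm x v a = 0}" using assms(1) by (intro span_minimal) auto
  moreover assume "v \<in> span S"
  ultimately show False using assms(2) by auto
qed

lemma cramer_2x2_sym:
  fixes A B C p q :: real
  assumes "A * C - B * B \<noteq> 0"
  shows "(p * C - q * B) / (A * C - B * B) * A + (q * A - p * B) / (A * C - B * B) * B = p"
    and "(p * C - q * B) / (A * C - B * B) * B + (q * A - p * B) / (A * C - B * B) * C = q"
  using assms by (simp_all add: divide_simps) (simp_all add: algebra_simps)

section \<open>Exterior derivatives of 1-forms\<close>

lemma frechet_derivative_inner:
  assumes "A differentiable (at x)" "B differentiable (at x)"
  shows "frechet_derivative (\<lambda>y. A y \<bullet> B y) (at x) v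
    = frechet_derivative A (at x) v \<bullet> B x + A x \<bullet> frechet_derivative B (at x) v"
proof -
  have "((\<lambda>y. A y \<bullet> B y) has_derivative
      (\<lambda>h. A x \<bullet> frechet_derivative B (at x) h + frechet_derivative A (at x) h \<bullet> B x)) (at x)"
    using assms by (intro bounded_bilinear.FDERIV[OF bounded_bilinear_inner])
      (simp_all add: frechet_derivative_works[symmetric])
  then show ?thesis by (simp flip: frechet_derivative_at)
qed

lemma frechet_derivative_locally_zero:
  assumes "open W" "x \<in> W" "\<And>y. y \<in> W \<Longrightarrow> h y = 0"
  shows "frechet_derivative h (at x) v = 0"
  using frechet_derivative_transform_within_open[of "\<lambda>y. 0" x W h, symmetric] assms by simp

lemma dform_swap: "dform \<alpha> x u v = - dform \<alpha> x v u"
  unfolding dform_def by (simp add: inner_commute)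

lemma dform_diag: "dform \<alpha> x u u = 0"
  unfolding dform_def by simp

lemma dform_linear_left:
  assumes "\<alpha> differentiable (at x)"
  shows "dform \<alpha> x (a *\<^sub>R u + b *\<^sub>R u') v = a * dform \<alpha> x u v + b * dform \<alpha> x u' v"
  using linear_frechet_derivative[OF assms]
  by (simp add: dform_def Dir_def linear_add linear_scale inner_add_left inner_add_right algebra_simps)

lemma dform_linear_right:
  assumes "\<alpha> differentiable (at x)"
  shows "dform \<alpha> x v (a *\<^sub>R u + b *\<^sub>R u') = a * dform \<alpha> x v u + b * dform \<alpha> x v u'"
  using dform_linear_left[OF assms, of a u b u' v] dform_swap[of \<alpha> x v] by (simp add: algebra_simps)

text \<open>Cartan's formula d\<alpha>(A,B) = A(\<alpha>(B)) - B(\<alpha>(A)) - \<alpha>([A,B]) at a point where the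
  derivatives of \<alpha>(A) and \<alpha>(B) vanish.\<close>
lemma dform_eq_lie:
  assumes "F differentiable (at x)" "A differentiable (at x)" "B differentiable (at x)"
    and "frechet_derivative (\<lambda>y. F y \<bullet> A y) (at x) (B x) = 0"
    and "frechet_derivative (\<lambda>y. F y \<bullet> B y) (at x) (A x) = 0"
  shows "dform F x (A x) (B x) = - (F x \<bullet> lie A B x)"
  using assms(4,5) frechet_derivative_inner[OF assms(1,2)] frechet_derivative_inner[OF assms(1,3)]
  by (simp add: dform_def lie_def Dir_def inner_diff_right)

lemma dform_plane:
  assumes "\<alpha> differentiable (at x)"
  shows "dform \<alpha> x (a *\<^sub>R e1 + b *\<^sub>R e2) (c *\<^sub>R e1 + d *\<^sub>R e2) = (a * d - b * c) * dform \<alpha> x e1 e2"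
  using dform_swap[of \<alpha> x e2 e1]
  by (simp add: dform_linear_left[OF assms] dform_linear_right[OF assms] dform_diag algebra_simps)

locale admissible_chart =
  fixes U :: "vec4 set" and gm :: "vec4 \<Rightarrow> real^4^4" and k t :: "vec4 \<Rightarrow> vec4"
    and l \<tau> :: "vec4 \<Rightarrow> real"
  assumes admissible: "admissible U gm k t l \<tau>"
begin

lemma open_U: "open U"
  and gm_symmetric: "x \<in> U \<Longrightarrow> transpose (gm x) = gm x"
  and gm_invertible: "x \<in> U \<Longrightarrow> invertible (gm x)"
  and smooth_gm: "smooth_on U gm"
  and smooth_k: "smooth_on U k"
  and smooth_t: "smooth_on U t"
  and smooth_tau: "smooth_on U \<tau>"
  and k_t_independent: "x \<in> U \<Longrightarrow> a *\<^sub>R k x + b *\<^sub>R t x = 0 \<Longrightarrow> a = 0 \<and> b = 0"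
  and gx_horizontal_pos: "x \<in> U \<Longrightarrow> v \<in> Hd gm k t x \<Longrightarrow> v \<noteq> 0 \<Longrightarrow> gx gm x v v > 0"
  and lie_horizontal: "smooth_on U X \<Longrightarrow> (\<forall>y\<in>U. X y \<in> Hd gm k t y) \<Longrightarrow> y \<in> U \<Longrightarrow>
    lie k X y \<in> Hd gm k t y \<and> lie t X y \<in> Hd gm k t y"
  and t_eq_grad_tau: "x \<in> U \<Longrightarrow> t x = l x *\<^sub>R grad gm \<tau> x"
  and grad_gkt_vertical: "x \<in> U \<Longrightarrow> grad gm (\<lambda>y. gx gm y (k y) (t y)) x \<in> Vd k t x"
  and grad_gkk_vertical: "x \<in> U \<Longrightarrow> grad gm (\<lambda>y. gx gm y (k y) (k y)) x \<in> Vd k t x"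
  using admissible unfolding admissible_def by blast+

lemma gx_sym: "x \<in> U \<Longrightarrow> gx gm x u v = gx gm x v u"
  using gx_commute gm_symmetric by blast

lemma vertical_iff: "v \<in> Vd k t x \<longleftrightarrow> (\<exists>a b. v = a *\<^sub>R k x + b *\<^sub>R t x)"
  unfolding Vd_def span_pair_iff ..

lemma horizontal_iff: "v \<in> Hd gm k t x \<longleftrightarrow> gx gm x v (k x) = 0 \<and> gx gm x v (t x) = 0"
proof
  assume "v \<in> Hd gm k t x"
  moreover have "k x \<in> Vd k t x" "t x \<in> Vd k t x"
    unfolding Vd_def by (simp_all add: span_base)
  ultimately show "gx gm x v (k x) = 0 \<and> gx gm x v (t x) = 0"
    unfolding Hd_def by blast
qed (auto simp: Hd_def vertical_iff gx_simps)

lemma gx_k_horizontal: "x \<in> U \<Longrightarrow> v \<in> Hd gm k t x \<Longrightarrow> gx gm x (k x) v = 0"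
  and gx_t_horizontal: "x \<in> U \<Longrightarrow> v \<in> Hd gm k t x \<Longrightarrow> gx gm x (t x) v = 0"
  using gx_sym by (simp_all add: horizontal_iff)

lemma gx_vertical_horizontal: "x \<in> U \<Longrightarrow> v \<in> Vd k t x \<Longrightarrow> w \<in> Hd gm k t x \<Longrightarrow> gx gm x v w = 0"
  unfolding Hd_def using gx_sym[of x v w] by simp

lemma horizontal_scaleR: "v \<in> Hd gm k t x \<Longrightarrow> r *\<^sub>R v \<in> Hd gm k t x"
  and horizontal_diff: "v \<in> Hd gm k t x \<Longrightarrow> w \<in> Hd gm k t x \<Longrightarrow> v - w \<in> Hd gm k t x"
  and horizontal_minus: "v \<in> Hd gm k t x \<Longrightarrow> - v \<in> Hd gm k t x"
  by (simp_all add: horizontal_iff gx_simps)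

lemma vertical_orthogonal_imp_zero:
  assumes x: "x \<in> U"
    and "gx gm x (a *\<^sub>R k x + b *\<^sub>R t x) (k x) = 0" "gx gm x (a *\<^sub>R k x + b *\<^sub>R t x) (t x) = 0"
  shows "a = 0 \<and> b = 0"
proof -
  let ?v = "a *\<^sub>R k x + b *\<^sub>R t x"
  have "?v \<in> Hd gm k t x" using assms by (simp add: horizontal_iff)
  moreover have "gx gm x ?v ?v = 0" using assms by (simp add: gx_simps)
  ultimately have "?v = 0" using gx_horizontal_pos[OF x] by fastforce
  then show ?thesis using k_t_independent[OF x] by blast
qed

lemma k_nonzero: "x \<in> U \<Longrightarrow> k x \<noteq> 0"
  using k_t_independent[of x 1 0] by auto

text \<open>G is the Gram determinant of (k, t); a null vector of the Gram matrix would be a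
  nonzero vector in both V and H.\<close>
lemma Gfun_nonzero:
  assumes x: "x \<in> U"
  shows "Gfun gm k t x \<noteq> 0"
proof
  let ?A = "gx gm x (k x) (k x)" and ?B = "gx gm x (k x) (t x)" and ?C = "gx gm x (t x) (t x)"
  assume "Gfun gm k t x = 0"
  then have "?A * ?C = ?B\<^sup>2" by (simp add: Gfun_def)
  then have "?B = 0 \<and> - ?A = 0"
    using gx_sym[OF x, of "t x" "k x"]
    by (intro vertical_orthogonal_imp_zero[OF x]) (simp_all add: gx_simps power2_eq_square)
  then have "1 = (0::real) \<and> 0 = (0::real)"
    using gx_sym[OF x, of "t x" "k x"] by (intro vertical_orthogonal_imp_zero[OF x]) (simp_all add: gx_simps)
  then show False by simp
qed

text \<open>The g-orthogonal splitting v = hor x v + kcoeff x v k + tcoeff x v t; the coefficients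
  solve the 2x2 Gram system by Cramer's rule.\<close>
definition kcoeff :: "vec4 \<Rightarrow> vec4 \<Rightarrow> real" where
  "kcoeff x v = (gx gm x v (k x) * gx gm x (t x) (t x) - gx gm x v (t x) * gx gm x (k x) (t x)) / Gfun gm k t x"

definition tcoeff :: "vec4 \<Rightarrow> vec4 \<Rightarrow> real" where
  "tcoeff x v = (gx gm x v (t x) * gx gm x (k x) (k x) - gx gm x v (k x) * gx gm x (k x) (t x)) / Gfun gm k t x"

definition hor :: "vec4 \<Rightarrow> vec4 \<Rightarrow> vec4" where
  "hor x v = v - kcoeff x v *\<^sub>R k x - tcoeff x v *\<^sub>R t x"

lemma hor_horizontal:
  assumes x: "x \<in> U"
  shows "hor x v \<in> Hd gm k t x"
proof -
  let ?A = "gx gm x (k x) (k x)" and ?B = "gx gm x (k x) (t x)" and ?C = "gx gm x (t x) (t x)"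
  have D: "?A * ?C - ?B * ?B \<noteq> 0"
    using Gfun_nonzero[OF x] by (simp add: Gfun_def power2_eq_square)
  have coeffs: "kcoeff x v = (gx gm x v (k x) * ?C - gx gm x v (t x) * ?B) / (?A * ?C - ?B * ?B)"
    "tcoeff x v = (gx gm x v (t x) * ?A - gx gm x v (k x) * ?B) / (?A * ?C - ?B * ?B)"
    by (simp_all add: kcoeff_def tcoeff_def Gfun_def power2_eq_square)
  have "kcoeff x v * ?A + tcoeff x v * ?B = gx gm x v (k x)"
    "kcoeff x v * ?B + tcoeff x v * ?C = gx gm x v (t x)"
    unfolding coeffs by (rule cramer_2x2_sym[OF D])+
  then show ?thesis
    using gx_sym[OF x, of "t x" "k x"] unfolding horizontal_iff hor_def by (simp add: gx_simps)
qed

lemma hor_decomposition: "v = hor x v + kcoeff x v *\<^sub>R k x + tcoeff x v *\<^sub>R t x"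
  by (simp add: hor_def)

lemma kcoeff_horizontal: "v \<in> Hd gm k t x \<Longrightarrow> kcoeff x v = 0"
  and tcoeff_horizontal: "v \<in> Hd gm k t x \<Longrightarrow> tcoeff x v = 0"
  by (simp_all add: kcoeff_def tcoeff_def horizontal_iff)

lemma hor_horizontal_id: "v \<in> Hd gm k t x \<Longrightarrow> hor x v = v"
  by (simp add: hor_def kcoeff_horizontal tcoeff_horizontal)

lemma kcoeff_k: "x \<in> U \<Longrightarrow> kcoeff x (k x) = 1" and tcoeff_k: "x \<in> U \<Longrightarrow> tcoeff x (k x) = 0"
  and kcoeff_t: "x \<in> U \<Longrightarrow> kcoeff x (t x) = 0" and tcoeff_t: "x \<in> U \<Longrightarrow> tcoeff x (t x) = 1"
  using Gfun_nonzero[of x] gx_sym[of x "k x" "t x"] unfolding kcoeff_def tcoeff_def Gfun_def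
  by (auto simp: field_simps power2_eq_square)

lemma kcoeff_add: "kcoeff x (u + w) = kcoeff x u + kcoeff x w"
  and kcoeff_scaleR: "kcoeff x (r *\<^sub>R u) = r * kcoeff x u"
  and tcoeff_add: "tcoeff x (u + w) = tcoeff x u + tcoeff x w"
  and tcoeff_scaleR: "tcoeff x (r *\<^sub>R u) = r * tcoeff x u"
  unfolding kcoeff_def tcoeff_def by (simp_all add: gx_simps add_divide_distrib diff_divide_distrib algebra_simps)

lemma smooth_hor: "smooth_on U (\<lambda>y. hor y w)"
proof -
  have G: "smooth_on U (Gfun gm k t)"
    unfolding Gfun_def power2_eq_square
    by (intro smooth_on_diff[OF open_U] smooth_on_mult[OF open_U] smooth_on_gx[OF open_U smooth_gm]
        smooth_k smooth_t)
  have w: "smooth_on U (\<lambda>y. w)" by (rule smooth_on_const[OF open_U])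
  have "smooth_on U (\<lambda>y. kcoeff y w)" "smooth_on U (\<lambda>y. tcoeff y w)"
    unfolding kcoeff_def tcoeff_def
    by (intro smooth_on_divide[OF open_U] smooth_on_diff[OF open_U] smooth_on_mult[OF open_U]
        smooth_on_gx[OF open_U smooth_gm] smooth_k smooth_t w G Gfun_nonzero; assumption)+
  then show ?thesis
    unfolding hor_def by (intro smooth_on_diff[OF open_U] smooth_on_scaleR[OF open_U] w smooth_k smooth_t)
qed

lemma horizontal_not_subset_span:
  assumes x: "x \<in> U" and "finite E" "card E \<le> 1"
  shows "\<not> Hd gm k t x \<subseteq> span E"
proof
  assume HE: "Hd gm k t x \<subseteq> span E"
  have "v \<in> span ({k x, t x} \<union> E)" for v
  proof -
    have "hor x v \<in> span ({k x, t x} \<union> E)"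
      using hor_horizontal[OF x, of v] HE span_mono[of E "{k x, t x} \<union> E"] by auto
    then show ?thesis
      by (subst hor_decomposition[of v x]) (intro span_add span_mul; auto intro: span_base)
  qed
  then have "dim (UNIV :: vec4 set) \<le> card ({k x, t x} \<union> E)"
    using assms(2) by (intro dim_le_card) auto
  also have "\<dots> \<le> card {k x, t x} + card E" by (rule card_Un_le)
  also have "\<dots> \<le> 3" using assms(3) card_insert_le_m1[of 2 "{t x}" "k x"] by (simp add: card_insert_if)
  finally show False by simp
qed

subsection \<open>Orthonormal frames of H and the complex structure J\<close>

definition hframe :: "vec4 \<Rightarrow> vec4 \<Rightarrow> vec4 \<Rightarrow> bool" where
  "hframe x e1 e2 \<longleftrightarrow> e1 \<in> Hd gm k t x \<and> e2 \<in> Hd gm k t x \<and>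
     gx gm x e1 e1 = 1 \<and> gx gm x e2 e2 = 1 \<and> gx gm x e1 e2 = 0"

lemma posframe_iff: "posframe gm k t x e1 e2 \<longleftrightarrow> hframe x e1 e2 \<and> det (vector [k x, t x, e1, e2] :: real^4^4) > 0"
  unfolding posframe_def hframe_def by auto

lemma hframe_gx:
  assumes "hframe x e1 e2" "x \<in> U"
  shows "e1 \<in> Hd gm k t x" "e2 \<in> Hd gm k t x" "gx gm x e1 e1 = 1" "gx gm x e2 e2 = 1"
    "gx gm x e1 e2 = 0" "gx gm x e2 e1 = 0"
    "gx gm x (k x) e1 = 0" "gx gm x (k x) e2 = 0" "gx gm x (t x) e1 = 0" "gx gm x (t x) e2 = 0"
    "gx gm x e1 (k x) = 0" "gx gm x e2 (k x) = 0" "gx gm x e1 (t x) = 0" "gx gm x e2 (t x) = 0"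
  using assms gx_sym[of x e1 e2] gx_k_horizontal gx_t_horizontal
  by (auto simp: hframe_def horizontal_iff)

lemma hframe_exists:
  assumes x: "x \<in> U"
  shows "\<exists>e1 e2. hframe x e1 e2"
proof -
  obtain h1 where h1: "h1 \<in> Hd gm k t x" "h1 \<noteq> 0"
    using horizontal_not_subset_span[OF x, of "{}"] by auto
  define e1 where "e1 = gnormalize gm x h1"
  have e1: "e1 \<in> Hd gm k t x" "gx gm x e1 e1 = 1"
    unfolding e1_def gnormalize_def using h1 gx_horizontal_pos[OF x]
    by (auto intro: horizontal_scaleR gx_gnormalize[unfolded gnormalize_def])
  obtain h2 where h2: "h2 \<in> Hd gm k t x" "h2 \<notin> span {e1}"
    using horizontal_not_subset_span[OF x, of "{e1}"] by auto
  define h2' where "h2' = h2 - gx gm x h2 e1 *\<^sub>R e1"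
  have h2': "h2' \<in> Hd gm k t x" "gx gm x e1 h2' = 0"
    unfolding h2'_def using h2(1) e1 gx_sym[OF x, of e1 h2]
    by (auto intro: horizontal_diff horizontal_scaleR simp: gx_simps)
  have "h2' \<noteq> 0"
    unfolding h2'_def using h2(2) by (metis eq_iff_diff_eq_0 span_base span_mul singletonI)
  then have "gx gm x h2' h2' > 0" by (rule gx_horizontal_pos[OF x h2'(1)])
  then have "hframe x e1 (gnormalize gm x h2')"
    using e1 h2' gx_gnormalize unfolding hframe_def gnormalize_def
    by (auto intro: horizontal_scaleR simp: gx_simps)
  then show ?thesis by blast
qed

text \<open>Otherwise k, t, e1, e2 and the component of h orthogonal to e1, e2 would be five
  independent vectors.\<close>
lemma hframe_expansion:
  assumes x: "x \<in> U" and e: "hframe x e1 e2" and h: "h \<in> Hd gm k t x"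
  shows "h = gx gm x h e1 *\<^sub>R e1 + gx gm x h e2 *\<^sub>R e2"
proof (rule ccontr)
  note e_gx = hframe_gx[OF e x]
  define h' where "h' = h - gx gm x h e1 *\<^sub>R e1 - gx gm x h e2 *\<^sub>R e2"
  assume "h \<noteq> gx gm x h e1 *\<^sub>R e1 + gx gm x h e2 *\<^sub>R e2"
  then have "h' \<noteq> 0" unfolding h'_def by (simp add: algebra_simps)
  moreover have h'H: "h' \<in> Hd gm k t x"
    unfolding h'_def using h e_gx by (intro horizontal_diff horizontal_scaleR)
  ultimately have "gx gm x h' h' > 0" using gx_horizontal_pos[OF x] by blast
  moreover have "gx gm x h' e1 = 0" "gx gm x h' e2 = 0"
    unfolding h'_def using e_gx by (simp_all add: gx_simps)
  ultimately have "h' \<notin> span {e2, e1, t x, k x}"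
    using h'H by (intro notin_span_gx_orthogonal) (auto simp: horizontal_iff)
  moreover have "e2 \<notin> span {e1, t x, k x}"
    by (rule notin_span_gx_orthogonal) (use e_gx in auto)
  moreover have "e1 \<notin> span {t x, k x}"
    by (rule notin_span_gx_orthogonal) (use e_gx in auto)
  moreover have "t x \<notin> span {k x}"
  proof
    assume "t x \<in> span {k x}"
    then obtain c where "t x = c *\<^sub>R k x" by (auto simp: span_singleton)
    then have "c *\<^sub>R k x + (-1) *\<^sub>R t x = 0" by simp
    then show False using k_t_independent[OF x] by fastforce
  qed
  ultimately have "dim {h', e2, e1, t x, k x} = 5"
    using k_nonzero[OF x] by (simp add: dim_insert)
  moreover have "dim {h', e2, e1, t x, k x} \<le> 4"
    using dim_subset_UNIV_cart[of "{h', e2, e1, t x, k x}"] by simp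
  ultimately show False by simp
qed

lemma frame_decomposition:
  assumes x: "x \<in> U" and e: "hframe x e1 e2"
  shows "v = gx gm x v e1 *\<^sub>R e1 + gx gm x v e2 *\<^sub>R e2 + kcoeff x v *\<^sub>R k x + tcoeff x v *\<^sub>R t x"
proof -
  have "gx gm x (hor x v) e1 = gx gm x v e1" "gx gm x (hor x v) e2 = gx gm x v e2"
    unfolding hor_def using hframe_gx[OF e x] by (simp_all add: gx_simps)
  then show ?thesis
    using hor_decomposition[of v x] hframe_expansion[OF x e hor_horizontal[OF x, of v]] by simp
qed

lemma det_hframe_nonzero:
  assumes x: "x \<in> U" and e: "hframe x e1 e2"
  shows "det (vector [k x, t x, e1, e2] :: real^4^4) \<noteq> 0"
proof (rule det_vector4_nonzero)
  fix \<alpha> \<beta> \<gamma> \<delta> assume z: "\<alpha> *\<^sub>R k x + \<beta> *\<^sub>R t x + \<gamma> *\<^sub>R e1 + \<delta> *\<^sub>R e2 = 0"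
  note e_gx = hframe_gx[OF e x]
  have "gx gm x (\<alpha> *\<^sub>R k x + \<beta> *\<^sub>R t x + \<gamma> *\<^sub>R e1 + \<delta> *\<^sub>R e2) e1 = \<gamma>"
    using e_gx by (simp add: gx_simps)
  then have "\<gamma> = 0" by (simp only: z gx_zero_left)
  have "gx gm x (\<alpha> *\<^sub>R k x + \<beta> *\<^sub>R t x + \<gamma> *\<^sub>R e1 + \<delta> *\<^sub>R e2) e2 = \<delta>"
    using e_gx by (simp add: gx_simps)
  then have "\<delta> = 0" by (simp only: z gx_zero_left)
  then show "\<alpha> = 0 \<and> \<beta> = 0 \<and> \<gamma> = 0 \<and> \<delta> = 0"
    using k_t_independent[OF x, of \<alpha> \<beta>] z \<open>\<gamma> = 0\<close> by simp
qed

lemma posframe_exists: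
  assumes x: "x \<in> U"
  shows "\<exists>e1 e2. posframe gm k t x e1 e2"
proof -
  obtain e1 e2 where e: "hframe x e1 e2" using hframe_exists[OF x] by blast
  then have "hframe x e1 (- e2)" by (auto simp: hframe_def gx_simps horizontal_minus)
  moreover have "det (vector [k x, t x, e1, - e2] :: real^4^4) = - det (vector [k x, t x, e1, e2])"
    using det_vector4_scale4[of "k x" "t x" e1 "-1" e2] by simp
  ultimately show ?thesis
    using e det_hframe_nonzero[OF x e] unfolding posframe_iff
    by (metis neg_0_less_iff_less linorder_neqE_linordered_idom)
qed

lemma posframe_rotation:
  assumes x: "x \<in> U" and e: "posframe gm k t x e1 e2" and f: "posframe gm k t x f1 f2"
  shows "f1 = gx gm x f1 e1 *\<^sub>R e1 + gx gm x f1 e2 *\<^sub>R e2"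
    and "f2 = (- gx gm x f1 e2) *\<^sub>R e1 + gx gm x f1 e1 *\<^sub>R e2"
    and "(gx gm x f1 e1)\<^sup>2 + (gx gm x f1 e2)\<^sup>2 = 1"
proof -
  have e': "hframe x e1 e2" and f': "hframe x f1 f2" using e f posframe_iff by auto
  note f_gx = hframe_gx[OF f' x]
  define a b c d where "a = gx gm x f1 e1" "b = gx gm x f1 e2" "c = gx gm x f2 e1" "d = gx gm x f2 e2"
  have f1: "f1 = a *\<^sub>R e1 + b *\<^sub>R e2" and f2: "f2 = c *\<^sub>R e1 + d *\<^sub>R e2"
    unfolding a_b_c_d_def using hframe_expansion[OF x e'] f_gx by blast+
  have "gx gm x f1 f1 = a\<^sup>2 + b\<^sup>2" "gx gm x f2 f2 = c\<^sup>2 + d\<^sup>2"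
    by (subst (2) f1 f2, simp add: gx_simps a_b_c_d_def power2_eq_square)+
  moreover have "gx gm x f1 f2 = a * c + b * d"
    by (subst f2) (simp add: gx_simps a_b_c_d_def)
  moreover have "det (vector [k x, t x, f1, f2] :: real^4^4) = (a * d - b * c) * det (vector [k x, t x, e1, e2])"
    unfolding f1 f2 by (rule det_vector4_rotate)
  ultimately have "a\<^sup>2 + b\<^sup>2 = 1" "c\<^sup>2 + d\<^sup>2 = 1" "a * c + b * d = 0" "a * d - b * c > 0"
    using f_gx e f unfolding posframe_iff by (auto simp: zero_less_mult_iff)
  then have "c = - b \<and> d = a" by (rule orthonormal_positive_pair_rotation)
  then show "f1 = gx gm x f1 e1 *\<^sub>R e1 + gx gm x f1 e2 *\<^sub>R e2"
    and "f2 = (- gx gm x f1 e2) *\<^sub>R e1 + gx gm x f1 e1 *\<^sub>R e2"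
    and "(gx gm x f1 e1)\<^sup>2 + (gx gm x f1 e2)\<^sup>2 = 1"
    using f1 f2 \<open>a\<^sup>2 + b\<^sup>2 = 1\<close> unfolding a_b_c_d_def by simp_all
qed

definition Jframe :: "vec4 \<Rightarrow> vec4 \<Rightarrow> vec4 \<Rightarrow> vec4 \<Rightarrow> vec4" where
  "Jframe x e1 e2 v = kcoeff x v *\<^sub>R t x - tcoeff x v *\<^sub>R k x + gx gm x v e1 *\<^sub>R e2 - gx gm x v e2 *\<^sub>R e1"

lemma linear_Jframe: "linear (Jframe x e1 e2)"
  by (rule linearI) (simp_all add: Jframe_def kcoeff_add tcoeff_add kcoeff_scaleR tcoeff_scaleR gx_simps algebra_simps)

lemma Jframe_horizontal:
  "h \<in> Hd gm k t x \<Longrightarrow> Jframe x e1 e2 h = gx gm x h e1 *\<^sub>R e2 - gx gm x h e2 *\<^sub>R e1"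
  by (simp add: Jframe_def kcoeff_horizontal tcoeff_horizontal)

lemma Jframe_horizontal_mem:
  "x \<in> U \<Longrightarrow> hframe x e1 e2 \<Longrightarrow> h \<in> Hd gm k t x \<Longrightarrow> Jframe x e1 e2 h \<in> Hd gm k t x"
  by (simp add: Jframe_horizontal hframe_def horizontal_diff horizontal_scaleR)

lemma Jframe_basis:
  assumes x: "x \<in> U" and e: "hframe x e1 e2"
  shows "Jframe x e1 e2 (k x) = t x" "Jframe x e1 e2 (t x) = - k x"
    "Jframe x e1 e2 e1 = e2" "Jframe x e1 e2 e2 = - e1"
  using hframe_gx[OF e x] kcoeff_k[OF x] tcoeff_k[OF x] kcoeff_t[OF x] tcoeff_t[OF x]
  by (simp_all add: Jframe_def kcoeff_horizontal tcoeff_horizontal)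

lemma Jframe_posframe:
  assumes x: "x \<in> U" and e: "posframe gm k t x e1 e2" and f: "posframe gm k t x f1 f2"
  shows "Jframe x e1 e2 f1 = f2 \<and> Jframe x e1 e2 f2 = - f1"
proof -
  have e': "hframe x e1 e2" using e posframe_iff by blast
  have J: "Jframe x e1 e2 (p *\<^sub>R e1 + q *\<^sub>R e2) = p *\<^sub>R e2 - q *\<^sub>R e1" for p q
    using linear_Jframe[of x e1 e2] Jframe_basis(3,4)[OF x e']
    by (simp add: linear_add linear_scale)
  obtain a b where f1: "f1 = a *\<^sub>R e1 + b *\<^sub>R e2" and f2: "f2 = (- b) *\<^sub>R e1 + a *\<^sub>R e2"
    using posframe_rotation[OF x e f] by blast
  show ?thesis
    unfolding f1 f2 J by (simp add: algebra_simps)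
qed

lemma linear_eq_on_frame:
  assumes x: "x \<in> U" and e: "hframe x e1 e2" and "linear L" "linear L'"
    and "L (k x) = L' (k x)" "L (t x) = L' (t x)" "L e1 = L' e1" "L e2 = L' e2"
  shows "L = L'"
proof
  fix v
  have v: "v = gx gm x v e1 *\<^sub>R e1 + gx gm x v e2 *\<^sub>R e2 + kcoeff x v *\<^sub>R k x + tcoeff x v *\<^sub>R t x"
    by (rule frame_decomposition[OF x e])
  show "L v = L' v"
    by (subst (1 2) v) (simp add: assms(3-) linear_add linear_scale)
qed

lemma Jop_eq_Jframe:
  assumes x: "x \<in> U" and e: "posframe gm k t x e1 e2"
  shows "Jop gm k t x = Jframe x e1 e2"
  unfolding Jop_def
proof (rule the_equality)
  have e': "hframe x e1 e2" using e posframe_iff by blast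
  then show "linear (Jframe x e1 e2) \<and> Jframe x e1 e2 (k x) = t x \<and> Jframe x e1 e2 (t x) = - k x \<and>
      (\<forall>f1 f2. posframe gm k t x f1 f2 \<longrightarrow> Jframe x e1 e2 f1 = f2 \<and> Jframe x e1 e2 f2 = - f1)"
    using linear_Jframe Jframe_basis(1,2)[OF x] Jframe_posframe[OF x e] by blast
  fix L assume "linear L \<and> L (k x) = t x \<and> L (t x) = - k x \<and>
      (\<forall>f1 f2. posframe gm k t x f1 f2 \<longrightarrow> L f1 = f2 \<and> L f2 = - f1)"
  then show "L = Jframe x e1 e2"
    using e e' by (intro linear_eq_on_frame[OF x e'])
      (auto simp: linear_Jframe Jframe_basis[OF x e'])
qed

lemma smooth_flat: "smooth_on U (flat gm k)"
  using smooth_on_matrix_vector_mult[OF open_U smooth_gm smooth_k]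
  by (rule smooth_on_cong[OF open_U, rotated]) (simp add: flat_def gm_symmetric)

lemma flat_differentiable: "x \<in> U \<Longrightarrow> flat gm k differentiable (at x)"
  by (rule smooth_on_differentiable[OF smooth_flat open_U])

lemma gx_grad:
  assumes x: "x \<in> U" and h: "h differentiable (at x)"
  shows "gx gm x (grad gm h x) w = frechet_derivative h (at x) w"
proof -
  let ?d = "\<chi> i. Dir h x (axis i 1)"
  have "gx gm x (grad gm h x) w = (transpose (gm x) *v grad gm h x) \<bullet> w"
    unfolding gx_def by (simp add: dot_lmul_matrix)
  also have "\<dots> = ((gm x ** matrix_inv (gm x)) *v ?d) \<bullet> w"
    unfolding grad_def using gm_symmetric[OF x] by (simp add: matrix_vector_mul_assoc)
  also have "\<dots> = (\<Sum>i\<in>UNIV. w $ i * Dir h x (axis i 1))"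
    using matrix_inv_right[OF gm_invertible[OF x]] by (simp add: inner_vec_def mult.commute)
  also have "\<dots> = frechet_derivative h (at x) (\<Sum>i\<in>UNIV. w $ i *\<^sub>R axis i 1)"
    using linear_frechet_derivative[OF h] by (simp add: Dir_def linear_sum linear_scale)
  also have "\<dots> = frechet_derivative h (at x) w"
    using basis_expansion[of w] by (simp add: scalar_mult_eq_scaleR)
  finally show ?thesis .
qed

lemma frechet_derivative_tau_horizontal:
  assumes x: "x \<in> U" and w: "w \<in> Hd gm k t x"
  shows "frechet_derivative \<tau> (at x) w = 0"
proof -
  have "l x \<noteq> 0" using k_t_independent[OF x, of 0 1] t_eq_grad_tau[OF x] by auto
  moreover have "l x * gx gm x (grad gm \<tau> x) w = 0"
    using gx_t_horizontal[OF x w] t_eq_grad_tau[OF x] by (simp add: gx_simps)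
  ultimately show ?thesis
    using gx_grad[OF x smooth_on_differentiable[OF smooth_tau open_U x]] by simp
qed

lemma frechet_derivative_gkk_gkt_horizontal:
  assumes x: "x \<in> U" and w: "w \<in> Hd gm k t x"
  shows "frechet_derivative (\<lambda>y. gx gm y (k y) (k y)) (at x) w = 0"
    and "frechet_derivative (\<lambda>y. gx gm y (k y) (t y)) (at x) w = 0"
  using gx_grad[OF x smooth_on_differentiable[OF smooth_on_gx[OF open_U smooth_gm smooth_k smooth_k] open_U x]]
    gx_grad[OF x smooth_on_differentiable[OF smooth_on_gx[OF open_U smooth_gm smooth_k smooth_t] open_U x]]
    gx_vertical_horizontal[OF x grad_gkk_vertical[OF x] w] gx_vertical_horizontal[OF x grad_gkt_vertical[OF x] w]
  by simp_all

text \<open>hor y w is a horizontal field extending w, so condition (1) applies to its brackets with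
  k and t.\<close>
lemma dflat_vertical_horizontal:
  assumes x: "x \<in> U" and v: "v \<in> Vd k t x" and w: "w \<in> Hd gm k t x"
  shows "dform (flat gm k) x v w = 0"
proof -
  define X where "X = (\<lambda>y. hor y w)"
  have X: "smooth_on U X" "\<forall>y\<in>U. X y \<in> Hd gm k t y" "X x = w"
    unfolding X_def using smooth_hor hor_horizontal hor_horizontal_id[OF w] by auto
  have dX: "X differentiable (at x)" by (rule smooth_on_differentiable[OF X(1) open_U x])
  have FX: "frechet_derivative (\<lambda>y. flat gm k y \<bullet> X y) (at x) u = 0" for u
    by (rule frechet_derivative_locally_zero[OF open_U x]) (use X(2) gx_k_horizontal in \<open>simp add: flat_inner\<close>)
  have "dform (flat gm k) x (k x) w = - (flat gm k x \<bullet> lie k X x)"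
    using dform_eq_lie[OF flat_differentiable[OF x] smooth_on_differentiable[OF smooth_k open_U x] dX]
      frechet_derivative_gkk_gkt_horizontal(1)[OF x w] FX X(3) by (simp add: flat_inner)
  moreover have "dform (flat gm k) x (t x) w = - (flat gm k x \<bullet> lie t X x)"
    using dform_eq_lie[OF flat_differentiable[OF x] smooth_on_differentiable[OF smooth_t open_U x] dX]
      frechet_derivative_gkk_gkt_horizontal(2)[OF x w] FX X(3) by (simp add: flat_inner)
  moreover obtain a b where "v = a *\<^sub>R k x + b *\<^sub>R t x" using v vertical_iff by blast
  ultimately show ?thesis
    using lie_horizontal[OF X(1,2) x] gx_k_horizontal[OF x]
    by (simp add: dform_linear_left[OF flat_differentiable[OF x]] flat_inner)
qed

subsection \<open>The twist function\<close>

lemma gx_k_lie_horizontal_fields: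
  assumes W: "open W" "W \<subseteq> U" "x \<in> W" and E: "smooth_on W E1" "smooth_on W E2"
    and H: "\<forall>y\<in>W. E1 y \<in> Hd gm k t y \<and> E2 y \<in> Hd gm k t y"
  shows "gx gm x (k x) (lie E1 E2 x) = - dform (flat gm k) x (E1 x) (E2 x)"
proof -
  have "frechet_derivative (\<lambda>y. flat gm k y \<bullet> E y) (at x) v = 0"
    if "\<forall>y\<in>W. E y \<in> Hd gm k t y" for E v
    by (rule frechet_derivative_locally_zero[OF W(1,3)])
      (use that W(2) gx_k_horizontal in \<open>auto simp: flat_inner\<close>)
  then show ?thesis
    using dform_eq_lie[OF flat_differentiable smooth_on_differentiable[OF E(1) W(1,3)]
        smooth_on_differentiable[OF E(2) W(1,3)]] H W
    by (auto simp: flat_inner)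
qed

lemma dflat_posframe_invariant:
  assumes x: "x \<in> U" and e: "posframe gm k t x e1 e2" and f: "posframe gm k t x f1 f2"
  shows "dform (flat gm k) x f1 f2 = dform (flat gm k) x e1 e2"
proof -
  obtain a b where f1: "f1 = a *\<^sub>R e1 + b *\<^sub>R e2" and f2: "f2 = (- b) *\<^sub>R e1 + a *\<^sub>R e2"
    and ab: "a\<^sup>2 + b\<^sup>2 = 1"
    using posframe_rotation[OF x e f] by blast
  have "dform (flat gm k) x f1 f2 = (a * a - b * (- b)) * dform (flat gm k) x e1 e2"
    unfolding f1 f2 by (rule dform_plane[OF flat_differentiable[OF x]])
  then show ?thesis using ab by (simp add: power2_eq_square)
qed

lemma hframe_gram_schmidt:
  assumes y: "y \<in> U" and a: "a \<in> Hd gm k t y" and b: "b \<in> Hd gm k t y"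
  defines "e \<equiv> gnormalize gm y a"
  defines "b' \<equiv> b - gx gm y b e *\<^sub>R e"
  assumes pos: "gx gm y a a > 0" "gx gm y b' b' > 0"
  shows "hframe y e (gnormalize gm y b')"
proof -
  have e: "e \<in> Hd gm k t y" "gx gm y e e = 1"
    unfolding e_def using a gx_gnormalize[OF pos(1)] by (auto intro: horizontal_scaleR simp: gnormalize_def)
  then have "b' \<in> Hd gm k t y" "gx gm y e b' = 0"
    unfolding b'_def using b gx_sym[OF y, of b e] by (auto intro: horizontal_diff horizontal_scaleR simp: gx_simps)
  then show ?thesis
    unfolding hframe_def using e gx_gnormalize[OF pos(2)]
    by (auto intro: horizontal_scaleR simp: gnormalize_def gx_simps)
qed

lemma hframe_local_extension:
  assumes x: "x \<in> U" and e: "hframe x e1 e2"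
  obtains W E1 E2 where "open W" "x \<in> W" "W \<subseteq> U" "smooth_on W E1" "smooth_on W E2"
    "\<forall>y\<in>W. hframe y (E1 y) (E2 y)" "E1 x = e1" "E2 x = e2"
proof -
  note e_gx = hframe_gx[OF e x]
  define X1 X2 where "X1 = (\<lambda>y. hor y e1)" and "X2 = (\<lambda>y. hor y e2)"
  have X: "smooth_on U X1" "smooth_on U X2" "\<forall>y\<in>U. X1 y \<in> Hd gm k t y \<and> X2 y \<in> Hd gm k t y"
    "X1 x = e1" "X2 x = e2"
    unfolding X1_def X2_def using smooth_hor hor_horizontal hor_horizontal_id e_gx by auto
  define W0 where "W0 = {y \<in> U. gx gm y (X1 y) (X1 y) > 0}"
  define E1 where "E1 = (\<lambda>y. gnormalize gm y (X1 y))"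
  define Y2 where "Y2 = (\<lambda>y. X2 y - gx gm y (X2 y) (E1 y) *\<^sub>R E1 y)"
  define W where "W = {y \<in> W0. gx gm y (Y2 y) (Y2 y) > 0}"
  define E2 where "E2 = (\<lambda>y. gnormalize gm y (Y2 y))"
  have W0: "open W0" "W0 \<subseteq> U"
    unfolding W0_def by (rule open_Collect_positive_on[OF open_U smooth_on_imp_continuous_on
        [OF smooth_on_gx[OF open_U smooth_gm X(1,1)]]]) auto
  have sE1: "smooth_on W0 E1"
    unfolding E1_def using W0 by (intro smooth_on_gnormalize smooth_on_subset[OF smooth_gm]
        smooth_on_subset[OF X(1)]) (auto simp: W0_def)
  have sY2: "smooth_on W0 Y2"
    unfolding Y2_def using W0 sE1
    by (intro smooth_on_diff smooth_on_scaleR smooth_on_gx smooth_on_subset[OF smooth_gm]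
        smooth_on_subset[OF X(2)]) auto
  have W: "open W" "W \<subseteq> W0"
    unfolding W_def by (rule open_Collect_positive_on[OF W0(1) smooth_on_imp_continuous_on
        [OF smooth_on_gx[OF W0(1) smooth_on_subset[OF smooth_gm W0(2)] sY2 sY2]]]) auto
  have "hframe y (E1 y) (E2 y)" if y: "y \<in> W" for y
    unfolding E2_def Y2_def E1_def
    by (rule hframe_gram_schmidt) (use y X(3) W0 in \<open>auto simp: W_def W0_def Y2_def E1_def\<close>)
  moreover have "E1 x = e1" "E2 x = e2"
    unfolding E1_def E2_def Y2_def using X(4,5) e_gx by (simp_all add: gnormalize_unit)
  moreover have "x \<in> W"
    unfolding W_def W0_def Y2_def using x X(4,5) e_gx \<open>E1 x = e1\<close> by simp
  moreover have "smooth_on W E1" by (rule smooth_on_subset[OF sE1 W(2)])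
  moreover have "smooth_on W E2"
    unfolding E2_def
    by (rule smooth_on_gnormalize[OF W(1) smooth_on_subset[OF smooth_gm] smooth_on_subset[OF sY2 W(2)]])
      (use W W0 in \<open>auto simp: W_def\<close>)
  ultimately show ?thesis using W W0 that by blast
qed

lemma posframe_local_extension:
  assumes x: "x \<in> U" and e: "posframe gm k t x e1 e2"
  obtains W E1 E2 where "open W" "x \<in> W" "W \<subseteq> U" "smooth_on W E1" "smooth_on W E2"
    "\<forall>y\<in>W. posframe gm k t y (E1 y) (E2 y)"
proof -
  have e': "hframe x e1 e2" and det: "det (vector [k x, t x, e1, e2] :: real^4^4) > 0"
    using e posframe_iff by auto
  obtain W E1 E2 where W: "open W" "x \<in> W" "W \<subseteq> U" "smooth_on W E1" "smooth_on W E2"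
    "\<forall>y\<in>W. hframe y (E1 y) (E2 y)" "E1 x = e1" "E2 x = e2"
    using hframe_local_extension[OF x e'] by blast
  define W' where "W' = {y \<in> W. det (vector [k y, t y, E1 y, E2 y] :: real^4^4) > 0}"
  have "open W'"
    unfolding W'_def using W(1,3,4,5)
    by (intro open_Collect_positive_on continuous_on_det_vector4 smooth_on_imp_continuous_on
        smooth_on_subset[OF smooth_k] smooth_on_subset[OF smooth_t])
  moreover have "x \<in> W'" "W' \<subseteq> U" "\<forall>y\<in>W'. posframe gm k t y (E1 y) (E2 y)"
    using W det unfolding W'_def posframe_iff by auto
  moreover have "smooth_on W' E1" "smooth_on W' E2"
    using W(4,5) by (auto intro: smooth_on_subset simp: W'_def)
  ultimately show ?thesis using that by blast
qed

lemma twist_eq_dflat: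
  assumes x: "x \<in> U" and e: "posframe gm k t x e1 e2"
  shows "twist U gm k t k x = - dform (flat gm k) x e1 e2"
  unfolding twist_def
proof (rule the_equality)
  have lie_eq: "gx gm x (k x) (lie E1 E2 x) = - dform (flat gm k) x e1 e2"
    if "open W" "x \<in> W" "W \<subseteq> U" "smooth_on W E1" "smooth_on W E2"
      "\<forall>y\<in>W. posframe gm k t y (E1 y) (E2 y)" for W E1 E2
    using gx_k_lie_horizontal_fields[OF that(1,3,2,4,5)] dflat_posframe_invariant[OF x e] that(2,6)
    by (auto simp: posframe_def)
  then show "\<forall>W E1 E2. open W \<and> x \<in> W \<and> W \<subseteq> U \<and> smooth_on W E1 \<and> smooth_on W E2 \<and>
      (\<forall>y\<in>W. posframe gm k t y (E1 y) (E2 y)) \<longrightarrow>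
      gx gm x (k x) (lie E1 E2 x) = - dform (flat gm k) x e1 e2"
    by blast
  fix c assume "\<forall>W E1 E2. open W \<and> x \<in> W \<and> W \<subseteq> U \<and> smooth_on W E1 \<and> smooth_on W E2 \<and>
      (\<forall>y\<in>W. posframe gm k t y (E1 y) (E2 y)) \<longrightarrow> gx gm x (k x) (lie E1 E2 x) = c"
  \<comment> \<open>Without a local frame the condition defining twist would be vacuous.\<close>
  moreover obtain W E1 E2 where "open W" "x \<in> W" "W \<subseteq> U" "smooth_on W E1" "smooth_on W E2"
    "\<forall>y\<in>W. posframe gm k t y (E1 y) (E2 y)"
    using posframe_local_extension[OF x e] by blast
  ultimately show "c = - dform (flat gm k) x e1 e2"
    using lie_eq by metis
qed

lemma has_derivative_scaled_flat:
  assumes x: "x \<in> U" and f: "f differentiable (at (\<tau> x))"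
  shows "((\<lambda>y. f (\<tau> y) *\<^sub>R flat gm k y) has_derivative
     (\<lambda>v. f (\<tau> x) *\<^sub>R Dir (flat gm k) x v + (deriv f (\<tau> x) * Dir \<tau> x v) *\<^sub>R flat gm k x)) (at x)"
proof -
  have "(f has_derivative (\<lambda>h. deriv f (\<tau> x) * h)) (at (\<tau> x))"
    using DERIV_deriv_iff_real_differentiable[THEN iffD2, OF f] by (simp add: has_field_derivative_def)
  then have "((\<lambda>y. f (\<tau> y)) has_derivative (\<lambda>v. deriv f (\<tau> x) * Dir \<tau> x v)) (at x)"
    using diff_chain_at[OF smooth_on_has_derivative[OF smooth_tau open_U x]] by (simp add: o_def Dir_def)
  then show ?thesis
    using has_derivative_scaleR smooth_on_has_derivative[OF smooth_flat open_U x] by (simp add: Dir_def)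
qed

lemma dform_scaled_flat_horizontal:
  assumes x: "x \<in> U" and f: "f differentiable (at (\<tau> x))" and w: "w \<in> Hd gm k t x"
  shows "dform (\<lambda>y. f (\<tau> y) *\<^sub>R flat gm k y) x u w = f (\<tau> x) * dform (flat gm k) x u w"
  using frechet_derivative_at[OF has_derivative_scaled_flat[OF x f], symmetric]
    frechet_derivative_tau_horizontal[OF x w]
    gx_k_horizontal[OF x w]
  by (simp add: dform_def Dir_def flat_inner inner_add_left algebra_simps)

lemma dflat_horizontal:
  assumes x: "x \<in> U" and e: "hframe x e1 e2" and u: "u \<in> Hd gm k t x" and w: "w \<in> Hd gm k t x"
  shows "dform (flat gm k) x u w
    = (gx gm x u e1 * gx gm x w e2 - gx gm x u e2 * gx gm x w e1) * dform (flat gm k) x e1 e2"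
  using arg_cong2[OF hframe_expansion[OF x e u] hframe_expansion[OF x e w], of "dform (flat gm k) x"]
  by (simp add: dform_plane[OF flat_differentiable[OF x]])

lemma gKahler_posframe:
  "x \<in> U \<Longrightarrow> posframe gm k t x e1 e2 \<Longrightarrow>
    gKahler gm k t f \<tau> x u v = dform (\<lambda>y. f (\<tau> y) *\<^sub>R flat gm k y) x u (Jframe x e1 e2 v)"
  by (simp add: gKahler_def Jop_eq_Jframe)

lemma gKahler_vertical_horizontal:
  assumes x: "x \<in> U" and f: "f differentiable (at (\<tau> x))"
    and v: "v \<in> Vd k t x" and w: "w \<in> Hd gm k t x"
  shows "gKahler gm k t f \<tau> x v w = 0"
proof -
  obtain e1 e2 where e: "posframe gm k t x e1 e2" using posframe_exists[OF x] by blast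
  then have Jw: "Jframe x e1 e2 w \<in> Hd gm k t x"
    using Jframe_horizontal_mem[OF x _ w] posframe_iff by blast
  show ?thesis
    using dflat_vertical_horizontal[OF x v Jw]
    by (simp add: gKahler_posframe[OF x e] dform_scaled_flat_horizontal[OF x f Jw])
qed

lemma gKahler_vertical:
  assumes x: "x \<in> U" and f: "f differentiable (at (\<tau> x))"
  shows "gKahler gm k t f \<tau> x (k x) (t x) = 0"
    and "gKahler gm k t f \<tau> x (k x) (k x) = gKahler gm k t f \<tau> x (t x) (t x)"
proof -
  let ?\<Phi> = "\<lambda>y. f (\<tau> y) *\<^sub>R flat gm k y"
  obtain e1 e2 where e: "posframe gm k t x e1 e2" using posframe_exists[OF x] by blast
  then have J: "Jframe x e1 e2 (k x) = t x" "Jframe x e1 e2 (t x) = - k x"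
    using Jframe_basis[OF x] posframe_iff by auto
  have "?\<Phi> differentiable (at x)" using has_derivative_scaled_flat[OF x f] by (rule differentiableI)
  then have "dform ?\<Phi> x u (- v) = - dform ?\<Phi> x u v" for u v
    using dform_linear_right[of ?\<Phi> x u "-1" v 0 v] by simp
  then show "gKahler gm k t f \<tau> x (k x) (t x) = 0"
    and "gKahler gm k t f \<tau> x (k x) (k x) = gKahler gm k t f \<tau> x (t x) (t x)"
    using dform_swap[of ?\<Phi> x "t x" "k x"] by (simp_all add: gKahler_posframe[OF x e] J dform_diag)
qed

lemma gKahler_horizontal:
  assumes x: "x \<in> U" and f: "f differentiable (at (\<tau> x))"
    and u: "u \<in> Hd gm k t x" and w: "w \<in> Hd gm k t x"
  shows "gKahler gm k t f \<tau> x u w = - f (\<tau> x) * twist U gm k t k x * gx gm x u w"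
proof -
  obtain e1 e2 where e: "posframe gm k t x e1 e2" using posframe_exists[OF x] by blast
  then have e': "hframe x e1 e2" using posframe_iff by blast
  note e_gx = hframe_gx[OF e' x]
  have Jw: "Jframe x e1 e2 w \<in> Hd gm k t x" by (rule Jframe_horizontal_mem[OF x e' w])
  have "gx gm x (Jframe x e1 e2 w) e1 = - gx gm x w e2" "gx gm x (Jframe x e1 e2 w) e2 = gx gm x w e1"
    using e_gx by (simp_all add: Jframe_horizontal[OF w] gx_simps)
  moreover have "gx gm x u w = gx gm x u e1 * gx gm x w e1 + gx gm x u e2 * gx gm x w e2"
    by (subst (1) hframe_expansion[OF x e' w]) (simp add: gx_simps)
  ultimately show ?thesis
    by (simp add: gKahler_posframe[OF x e] dform_scaled_flat_horizontal[OF x f Jw]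
        dflat_horizontal[OF x e' u Jw] twist_eq_dflat[OF x e] algebra_simps)
qed

end

theorem lemma4p5:
  fixes U :: "vec4 set" and gm :: "vec4 \<Rightarrow> real^4^4" and k t :: "vec4 \<Rightarrow> vec4"
    and l \<tau> :: "vec4 \<Rightarrow> real" and f :: "real \<Rightarrow> real" and S :: "real set"
  assumes "admissible U gm k t l \<tau>"
    and "open S" and "\<tau> ` U \<subseteq> S" and "smooth_on S f"
  shows "\<forall>x\<in>Kregion U gm k t l \<tau> f.
      (\<forall>v\<in>Vd k t x. \<forall>w\<in>Hd gm k t x. gKahler gm k t f \<tau> x v w = 0) \<and>
      gKahler gm k t f \<tau> x (k x) (t x) = 0 \<and>
      gKahler gm k t f \<tau> x (k x) (k x) = gKahler gm k t f \<tau> x (t x) (t x) \<and>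
      (\<forall>u\<in>Hd gm k t x. \<forall>w\<in>Hd gm k t x.
          gKahler gm k t f \<tau> x u w = - f (\<tau> x) * twist U gm k t k x * gx gm x u w)"
proof -
  interpret admissible_chart U gm k t l \<tau> by (rule admissible_chart.intro) (rule assms(1))
  have "Kregion U gm k t l \<tau> f \<subseteq> U" by (auto simp: Kregion_def)
  moreover have "f differentiable (at (\<tau> x))" if "x \<in> U" for x
    using smooth_on_differentiable[OF assms(4,2)] assms(3) that by blast
  ultimately show ?thesis
    using gKahler_vertical_horizontal gKahler_vertical gKahler_horizontal by blast
qed

end
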